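(* Let $X$ be a B-convex Köthe function space over a $\sigma$-finite measure space $S$, and let $\Omega: X\to L_0(S)$ be a homogeneous quasi-linear map, i.e. $\Omega(\lambda f)=\lambda\Omega(f)$ and there is $C$ with $\Omega(f+f')-\Omega(f)-\Omega(f')\in X$ and $\|\Omega(f+f')-\Omega(f)-\Omega(f')\|_X\le C(\|f\|_X+\|f'\|_X)$ for all $f,f'\in X$. Let $\mathcal U$ be the group of units. Then the following are equivalent: (a) $\Omega$ is a $\mathcal U$-centralizer; (b) $\Omega$ is an $L_\infty$-centralizer.
   Context: The group of units $\mathcal U$ is the group of measurable functions $a$ on $S$ with $|a|=1$ a.e., acting on $X$ and on $L_0(S)$ by multiplication $f\mapsto af$. $\Omega$ is a $\mathcal U$-centralizer if there is $C$ such that $\Omega(af)-a\Omega(f)\in X$ and $\|\Omega(af)-a\Omega(f)\|_X\le C\|f\|_X$ for all $a\in\mathcal U$, $f\in X$. $\Omega$ is an $L_\infty$-centralizer if there is $C$ such that $\|\Omega(af)-a\Omega(f)\|_X\le C\|a\|_\infty\|f\|_X$ for all $a\in L_\infty(S)$, $f\in X$. *)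

theory Defs
  imports "HOL-Analysis.Analysis" "HOL-Probability.Essential_Supremum"
begin

text \<open>Elements of L0(S) are represented by (complex-valued) measurable functions on the
measure space M; equalities in L0 are read almost everywhere.\<close>

definition koethe_space ::
  "'a measure \<Rightarrow> ('a \<Rightarrow> complex) set \<Rightarrow> (('a \<Rightarrow> complex) \<Rightarrow> real) \<Rightarrow> bool" where
  "koethe_space M X N \<longleftrightarrow>
     X \<subseteq> borel_measurable M \<and>
     \<comment> \<open>vector space under pointwise operations\<close>
     (\<forall>f\<in>X. \<forall>g\<in>X. (\<lambda>x. f x + g x) \<in> X) \<and>
     (\<forall>c. \<forall>f\<in>X. (\<lambda>x. c * f x) \<in> X) \<and>
     \<comment> \<open>norm (zero exactly on the a.e.-zero functions)\<close>
     (\<forall>f\<in>X. 0 \<le> N f) \<and>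
     (\<forall>f\<in>X. N f = 0 \<longleftrightarrow> (AE x in M. f x = 0)) \<and>
     (\<forall>c. \<forall>f\<in>X. N (\<lambda>x. c * f x) = norm c * N f) \<and>
     (\<forall>f\<in>X. \<forall>g\<in>X. N (\<lambda>x. f x + g x) \<le> N f + N g) \<and>
     \<comment> \<open>ideal (lattice) property\<close>
     (\<forall>f\<in>X. \<forall>g\<in>borel_measurable M.
        (AE x in M. norm (g x) \<le> norm (f x)) \<longrightarrow> g \<in> X \<and> N g \<le> N f) \<and>
     \<comment> \<open>completeness\<close>
     (\<forall>u. (\<forall>n. u n \<in> X) \<longrightarrow>
        (\<forall>e>0. \<exists>K. \<forall>m\<ge>K. \<forall>n\<ge>K. N (\<lambda>x. u m x - u n x) < e) \<longrightarrow>
        (\<exists>g\<in>X. (\<lambda>n. N (\<lambda>x. u n x - g x)) \<longlonglongrightarrow> 0)) \<and>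
     \<comment> \<open>indicators of sets of finite measure belong to X\<close>
     (\<forall>A\<in>sets M. emeasure M A < \<infinity> \<longrightarrow> (\<lambda>x. complex_of_real (indicator A x)) \<in> X) \<and>
     \<comment> \<open>elements of X are integrable over sets of finite measure\<close>
     (\<forall>f\<in>X. \<forall>A\<in>sets M. emeasure M A < \<infinity> \<longrightarrow>
        (\<integral>\<^sup>+ x\<in>A. ennreal (norm (f x)) \<partial>M) < \<infinity>)"

definition B_convex :: "('a \<Rightarrow> complex) set \<Rightarrow> (('a \<Rightarrow> complex) \<Rightarrow> real) \<Rightarrow> bool" where
  "B_convex X N \<longleftrightarrow>
     (\<exists>n::nat. n \<ge> 1 \<and> (\<exists>\<epsilon>::real. \<epsilon> > 0 \<and>
       (\<forall>v :: nat \<Rightarrow> 'a \<Rightarrow> complex. (\<forall>i<n. v i \<in> X \<and> N (v i) \<le> 1) \<longrightarrow>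
          (\<exists>s :: nat \<Rightarrow> real. (\<forall>i<n. s i = 1 \<or> s i = -1) \<and>
             N (\<lambda>x. \<Sum>i<n. complex_of_real (s i) * v i x) \<le> real n * (1 - \<epsilon>)))))"

text \<open>Homogeneous quasi-linear map \<Omega> : X \<rightarrow> L0(S).  Since \<Omega> is a map on equivalence
classes, we require that it respects a.e. equality.\<close>
definition hom_quasi_linear ::
  "'a measure \<Rightarrow> ('a \<Rightarrow> complex) set \<Rightarrow> (('a \<Rightarrow> complex) \<Rightarrow> real)
     \<Rightarrow> (('a \<Rightarrow> complex) \<Rightarrow> ('a \<Rightarrow> complex)) \<Rightarrow> bool" where
  "hom_quasi_linear M X N \<Omega> \<longleftrightarrow>
     (\<forall>f\<in>X. \<Omega> f \<in> borel_measurable M) \<and>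
     (\<forall>f\<in>X. \<forall>g\<in>X. (AE x in M. f x = g x) \<longrightarrow> (AE x in M. \<Omega> f x = \<Omega> g x)) \<and>
     (\<forall>c. \<forall>f\<in>X. AE x in M. \<Omega> (\<lambda>t. c * f t) x = c * \<Omega> f x) \<and>
     (\<exists>C. \<forall>f\<in>X. \<forall>g\<in>X.
        (\<lambda>x. \<Omega> (\<lambda>t. f t + g t) x - \<Omega> f x - \<Omega> g x) \<in> X \<and>
        N (\<lambda>x. \<Omega> (\<lambda>t. f t + g t) x - \<Omega> f x - \<Omega> g x) \<le> C * (N f + N g))"

definition units_group :: "'a measure \<Rightarrow> ('a \<Rightarrow> complex) set" where
  "units_group M = {a \<in> borel_measurable M. AE x in M. norm (a x) = 1}"

definition Linf :: "'a measure \<Rightarrow> ('a \<Rightarrow> complex) set" where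
  "Linf M = {a \<in> borel_measurable M. \<exists>B. AE x in M. norm (a x) \<le> B}"

definition Linf_norm :: "'a measure \<Rightarrow> ('a \<Rightarrow> complex) \<Rightarrow> real" where
  "Linf_norm M a = real_of_ereal (esssup M (\<lambda>x. ereal (norm (a x))))"

definition U_centralizer ::
  "'a measure \<Rightarrow> ('a \<Rightarrow> complex) set \<Rightarrow> (('a \<Rightarrow> complex) \<Rightarrow> real)
     \<Rightarrow> (('a \<Rightarrow> complex) \<Rightarrow> ('a \<Rightarrow> complex)) \<Rightarrow> bool" where
  "U_centralizer M X N \<Omega> \<longleftrightarrow>
     (\<exists>C. \<forall>a\<in>units_group M. \<forall>f\<in>X.
        (\<lambda>x. \<Omega> (\<lambda>t. a t * f t) x - a x * \<Omega> f x) \<in> X \<and>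
        N (\<lambda>x. \<Omega> (\<lambda>t. a t * f t) x - a x * \<Omega> f x) \<le> C * N f)"

definition Linf_centralizer ::
  "'a measure \<Rightarrow> ('a \<Rightarrow> complex) set \<Rightarrow> (('a \<Rightarrow> complex) \<Rightarrow> real)
     \<Rightarrow> (('a \<Rightarrow> complex) \<Rightarrow> ('a \<Rightarrow> complex)) \<Rightarrow> bool" where
  "Linf_centralizer M X N \<Omega> \<longleftrightarrow>
     (\<exists>C. \<forall>a\<in>Linf M. \<forall>f\<in>X.
        (\<lambda>x. \<Omega> (\<lambda>t. a t * f t) x - a x * \<Omega> f x) \<in> X \<and>
        N (\<lambda>x. \<Omega> (\<lambda>t. a t * f t) x - a x * \<Omega> f x) \<le> C * Linf_norm M a * N f)"

end

theory Submission imports Defs begin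

text \<open>Units lie in the unit ball of \<open>L\<^sub>\<infinity>\<close>, which gives (b) \<open>\<Longrightarrow>\<close> (a).  Conversely every
measurable \<open>b\<close> with \<open>|b| \<le> 1\<close> is the midpoint of two units \<open>u, v\<close>, namely
\<open>sgn b (|b| \<plusminus> i \<surd>(1 - |b|\<^sup>2))\<close>; by homogeneity the defect \<open>\<Omega>(bf) - b\<Omega>(f)\<close> is half the
quasi-linearity defect of \<open>uf, vf\<close> plus half the defects for \<open>u\<close> and \<open>v\<close>, so it is bounded
by a constant times \<open>\<parallel>f\<parallel>\<close>.  A general \<open>a \<in> L\<^sub>\<infinity>\<close> is \<open>\<parallel>a\<parallel>\<^sub>\<infinity>\<close> times such a \<open>b\<close>.\<close>

definition mult_defect ::
  "(('a \<Rightarrow> complex) \<Rightarrow> ('a \<Rightarrow> complex)) \<Rightarrow> ('a \<Rightarrow> complex) \<Rightarrow> ('a \<Rightarrow> complex) \<Rightarrow> 'a \<Rightarrow> complex" where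
  "mult_defect \<Omega> a f = (\<lambda>x. \<Omega> (\<lambda>t. a t * f t) x - a x * \<Omega> f x)"

definition add_defect ::
  "(('a \<Rightarrow> complex) \<Rightarrow> ('a \<Rightarrow> complex)) \<Rightarrow> ('a \<Rightarrow> complex) \<Rightarrow> ('a \<Rightarrow> complex) \<Rightarrow> 'a \<Rightarrow> complex" where
  "add_defect \<Omega> f g = (\<lambda>x. \<Omega> (\<lambda>t. f t + g t) x - \<Omega> f x - \<Omega> g x)"

lemma U_centralizer_iff:
  "U_centralizer M X N \<Omega> \<longleftrightarrow>
     (\<exists>C. \<forall>a\<in>units_group M. \<forall>f\<in>X. mult_defect \<Omega> a f \<in> X \<and> N (mult_defect \<Omega> a f) \<le> C * N f)"
  by (simp add: U_centralizer_def mult_defect_def)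

lemma Linf_centralizer_iff:
  "Linf_centralizer M X N \<Omega> \<longleftrightarrow>
     (\<exists>C. \<forall>a\<in>Linf M. \<forall>f\<in>X.
        mult_defect \<Omega> a f \<in> X \<and> N (mult_defect \<Omega> a f) \<le> C * Linf_norm M a * N f)"
  by (simp add: Linf_centralizer_def mult_defect_def)

lemma hom_quasi_linearD:
  assumes "hom_quasi_linear M X N \<Omega>"
  shows hom_quasi_linear_measurable: "f \<in> X \<Longrightarrow> \<Omega> f \<in> borel_measurable M"
    and hom_quasi_linear_AE_cong:
      "f \<in> X \<Longrightarrow> g \<in> X \<Longrightarrow> (AE x in M. f x = g x) \<Longrightarrow> AE x in M. \<Omega> f x = \<Omega> g x"
    and hom_quasi_linear_homogeneous: "f \<in> X \<Longrightarrow> AE x in M. \<Omega> (\<lambda>t. c * f t) x = c * \<Omega> f x"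
    and hom_quasi_linear_add_defect:
      "\<exists>C. \<forall>f\<in>X. \<forall>g\<in>X. add_defect \<Omega> f g \<in> X \<and> N (add_defect \<Omega> f g) \<le> C * (N f + N g)"
  using assms unfolding hom_quasi_linear_def add_defect_def by blast+

context
  fixes M :: "'a measure" and X :: "('a \<Rightarrow> complex) set" and N :: "('a \<Rightarrow> complex) \<Rightarrow> real"
  assumes K: "koethe_space M X N"
begin

lemma koethe_space_measurable: "f \<in> X \<Longrightarrow> f \<in> borel_measurable M"
  using K unfolding koethe_space_def by blast

lemma koethe_space_norm_nonneg: "f \<in> X \<Longrightarrow> 0 \<le> N f"
  using K unfolding koethe_space_def by blast

lemma koethe_space_add:
  "f \<in> X \<Longrightarrow> g \<in> X \<Longrightarrow> (\<lambda>x. f x + g x) \<in> X \<and> N (\<lambda>x. f x + g x) \<le> N f + N g"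
  using K unfolding koethe_space_def by blast

lemma koethe_space_scale: "f \<in> X \<Longrightarrow> (\<lambda>x. c * f x) \<in> X \<and> N (\<lambda>x. c * f x) = norm c * N f"
  using K unfolding koethe_space_def by blast

lemma koethe_space_ideal:
  "f \<in> X \<Longrightarrow> g \<in> borel_measurable M \<Longrightarrow> (AE x in M. norm (g x) \<le> norm (f x)) \<Longrightarrow>
     g \<in> X \<and> N g \<le> N f"
  using K unfolding koethe_space_def by blast

lemma koethe_space_AE_eq:
  assumes f: "f \<in> X" and g: "g \<in> borel_measurable M" and ae: "AE x in M. g x = f x"
  shows "g \<in> X \<and> N g = N f"
proof -
  have "g \<in> X \<and> N g \<le> N f"
    using ae by (intro koethe_space_ideal[OF f g]) auto
  moreover have "N f \<le> N g"
    using calculation ae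
    by (intro koethe_space_ideal[OF _ koethe_space_measurable[OF f], THEN conjunct2]) auto
  ultimately show ?thesis by simp
qed

lemma koethe_space_mult_contraction:
  assumes f: "f \<in> X" and b: "b \<in> borel_measurable M" and le: "AE x in M. norm (b x) \<le> 1"
  shows "(\<lambda>x. b x * f x) \<in> X \<and> N (\<lambda>x. b x * f x) \<le> N f"
proof (rule koethe_space_ideal[OF f])
  show "(\<lambda>x. b x * f x) \<in> borel_measurable M"
    using b koethe_space_measurable[OF f] by measurable
  show "AE x in M. norm (b x * f x) \<le> norm (f x)"
    using le by eventually_elim (simp add: norm_mult mult_left_le_one_le)
qed

lemma koethe_space_mult_AE_scale:
  assumes f: "f \<in> X" and a: "a \<in> borel_measurable M" and bf: "(\<lambda>t. b t * f t) \<in> X"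
    and ab: "AE x in M. a x = c * b x"
  shows "(\<lambda>t. a t * f t) \<in> X"
proof -
  have "(\<lambda>t. a t * f t) \<in> borel_measurable M"
    using a koethe_space_measurable[OF f] by measurable
  moreover have "AE x in M. a x * f x = c * (b x * f x)"
    using ab by eventually_elim simp
  ultimately show ?thesis
    using koethe_space_AE_eq[OF koethe_space_scale[OF bf, THEN conjunct1]] by blast
qed

lemma koethe_space_half_sum3:
  assumes "f \<in> X" "g \<in> X" "h \<in> X"
  shows "(\<lambda>x. (f x + g x + h x) / 2) \<in> X \<and> N (\<lambda>x. (f x + g x + h x) / 2) \<le> (N f + N g + N h) / 2"
proof -
  have "(\<lambda>x. f x + g x + h x) \<in> X \<and> N (\<lambda>x. f x + g x + h x) \<le> N f + N g + N h"
    using koethe_space_add[OF koethe_space_add[OF assms(1,2), THEN conjunct1] assms(3)]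
      koethe_space_add[OF assms(1,2)] by simp
  then show ?thesis
    using koethe_space_scale[of "\<lambda>x. f x + g x + h x" "1/2"] by simp
qed

end

lemma Linf_norm_nonneg:
  assumes a: "a \<in> borel_measurable M"
  shows "0 \<le> Linf_norm M a"
proof (cases "emeasure M (space M) = 0")
  case True
  have "esssup M (\<lambda>x. ereal (norm (a x))) = - \<infinity>"
    by (rule esssup_zero_space[OF True]) (use a in measurable)
  then show ?thesis by (simp add: Linf_norm_def)
next
  case False
  have "esssup M (\<lambda>x. 0::ereal) \<le> esssup M (\<lambda>x. ereal (norm (a x)))"
    by (rule esssup_mono) auto
  then show ?thesis
    using esssup_const[OF False, of "0::ereal"] by (simp add: Linf_norm_def real_of_ereal_pos)
qed

lemma AE_norm_le_Linf_norm:
  assumes a: "a \<in> Linf M"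
  shows "AE x in M. norm (a x) \<le> Linf_norm M a"
proof -
  from a obtain B where m: "a \<in> borel_measurable M" and B: "AE x in M. norm (a x) \<le> B"
    by (auto simp: Linf_def)
  let ?e = "esssup M (\<lambda>x. ereal (norm (a x)))"
  have le: "?e \<le> ereal B"
    by (rule esssup_I) (use m B in auto)
  have ae: "AE x in M. ereal (norm (a x)) \<le> ?e" by (rule esssup_AE)
  show ?thesis
  proof (cases "?e = -\<infinity>")
    case True
    with ae have "AE x in M. False" by simp
    then show ?thesis by (rule AE_mp) simp
  next
    case False
    with le obtain r where "?e = ereal r" by (cases ?e) auto
    with ae show ?thesis by (simp add: Linf_norm_def)
  qed
qed

lemma units_group_subset_Linf: "units_group M \<subseteq> Linf M"
  by (auto simp: units_group_def Linf_def elim!: AE_mp intro!: exI[of _ 1])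

lemma Linf_norm_unit_le_one:
  assumes a: "a \<in> units_group M"
  shows "Linf_norm M a \<le> 1"
proof -
  from a have m: "a \<in> borel_measurable M" and B: "AE x in M. norm (a x) = 1"
    by (auto simp: units_group_def)
  have "esssup M (\<lambda>x. ereal (norm (a x))) \<le> ereal 1"
    by (rule esssup_I) (use m B in auto)
  then show ?thesis unfolding Linf_norm_def
    by (cases "esssup M (\<lambda>x. ereal (norm (a x)))") auto
qed

lemma units_group_midpoint:
  fixes b :: "'a \<Rightarrow> complex"
  assumes b: "b \<in> borel_measurable M" and le: "\<And>x. norm (b x) \<le> 1"
  obtains u v where "u \<in> units_group M" "v \<in> units_group M" "\<And>x. u x + v x = 2 * b x"
proof -
  define s where "s x = sqrt (1 - (norm (b x))\<^sup>2)" for x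
  define u where "u x = (if b x = 0 then 1
    else sgn (b x) * (complex_of_real (norm (b x)) + \<i> * complex_of_real (s x)))" for x
  define v where "v x = (if b x = 0 then -1
    else sgn (b x) * (complex_of_real (norm (b x)) - \<i> * complex_of_real (s x)))" for x
  have sm: "s \<in> borel_measurable M" unfolding s_def[abs_def] using b by measurable
  have s2: "(s x)\<^sup>2 = 1 - (norm (b x))\<^sup>2" for x
    unfolding s_def using le[of x] by (simp add: power_le_one)
  have on_circle: "norm (complex_of_real r + \<i> * complex_of_real t) = 1"
    "norm (complex_of_real r - \<i> * complex_of_real t) = 1" if "r\<^sup>2 + t\<^sup>2 = 1" for r t
    using that by (simp_all add: cmod_def)
  have "u \<in> units_group M"
    using b sm on_circle(1)[of "norm (b _)" "s _"] s2
    unfolding units_group_def u_def[abs_def] by (auto simp: norm_mult norm_sgn)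
  moreover have "v \<in> units_group M"
    using b sm on_circle(2)[of "norm (b _)" "s _"] s2
    unfolding units_group_def v_def[abs_def] by (auto simp: norm_mult norm_sgn)
  moreover have "u x + v x = 2 * b x" for x
    by (cases "b x = 0") (simp_all add: u_def v_def sgn_div_norm algebra_simps scaleR_conv_of_real)
  ultimately show ?thesis by (rule that)
qed

lemma mult_defect_midpoint:
  assumes K: "koethe_space M X N" and Q: "hom_quasi_linear M X N \<Omega>"
    and uf: "(\<lambda>t. u t * f t) \<in> X" and vf: "(\<lambda>t. v t * f t) \<in> X"
    and uv: "\<And>x. u x + v x = 2 * b x"
  shows "AE x in M. mult_defect \<Omega> b f x =
    (add_defect \<Omega> (\<lambda>t. u t * f t) (\<lambda>t. v t * f t) x + mult_defect \<Omega> u f x + mult_defect \<Omega> v f x) / 2"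
proof -
  let ?g = "\<lambda>t. u t * f t + v t * f t"
  have bf: "(\<lambda>t. b t * f t) = (\<lambda>t. (1/2) * ?g t)"
    by (rule ext) (simp add: distrib_right[symmetric] uv)
  have "?g \<in> X" using koethe_space_add[OF K uf vf] by blast
  from hom_quasi_linear_homogeneous[OF Q this, of "1/2"]
  show ?thesis
  proof eventually_elim
    case (elim x)
    have "b x * \<Omega> f x = (u x * \<Omega> f x + v x * \<Omega> f x) / 2"
      by (simp add: distrib_right[symmetric] uv)
    with elim show ?case
      by (simp add: mult_defect_def add_defect_def bf field_simps)
  qed
qed

lemma mult_defect_contraction_bound:
  assumes K: "koethe_space M X N" and Q: "hom_quasi_linear M X N \<Omega>"
    and C1: "\<forall>f\<in>X. \<forall>g\<in>X. add_defect \<Omega> f g \<in> X \<and> N (add_defect \<Omega> f g) \<le> C1 * (N f + N g)"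
    and C0: "\<forall>a\<in>units_group M. \<forall>f\<in>X.
      mult_defect \<Omega> a f \<in> X \<and> N (mult_defect \<Omega> a f) \<le> C0 * N f"
    and b: "b \<in> borel_measurable M" and le: "\<And>x. norm (b x) \<le> 1" and f: "f \<in> X"
  shows "mult_defect \<Omega> b f \<in> X \<and> N (mult_defect \<Omega> b f) \<le> (\<bar>C0\<bar> + \<bar>C1\<bar>) * N f"
proof -
  obtain u v where u: "u \<in> units_group M" and v: "v \<in> units_group M"
    and uv: "\<And>x. u x + v x = 2 * b x"
    using units_group_midpoint[OF b le] by blast
  have Nf: "0 \<le> N f" using koethe_space_norm_nonneg[OF K f] .
  have unit_mult: "(\<lambda>t. w t * f t) \<in> X" "N (\<lambda>t. w t * f t) \<le> N f" if "w \<in> units_group M" for w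
  proof -
    have "w \<in> borel_measurable M" "AE x in M. norm (w x) \<le> 1"
      using that by (auto simp: units_group_def elim!: AE_mp)
    from koethe_space_mult_contraction[OF K f this]
    show "(\<lambda>t. w t * f t) \<in> X" "N (\<lambda>t. w t * f t) \<le> N f" by simp_all
  qed
  let ?q = "add_defect \<Omega> (\<lambda>t. u t * f t) (\<lambda>t. v t * f t)"
  have q: "?q \<in> X" "N ?q \<le> C1 * (N (\<lambda>t. u t * f t) + N (\<lambda>t. v t * f t))"
    using C1 unit_mult(1)[OF u] unit_mult(1)[OF v] by blast+
  have "C1 * (N (\<lambda>t. u t * f t) + N (\<lambda>t. v t * f t))
      \<le> \<bar>C1\<bar> * (N (\<lambda>t. u t * f t) + N (\<lambda>t. v t * f t))"
    using koethe_space_norm_nonneg[OF K unit_mult(1)[OF u]]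
      koethe_space_norm_nonneg[OF K unit_mult(1)[OF v]]
    by (intro mult_right_mono) auto
  also have "\<dots> \<le> \<bar>C1\<bar> * (2 * N f)"
    using unit_mult(2)[OF u] unit_mult(2)[OF v] by (intro mult_left_mono) auto
  finally have Nq: "N ?q \<le> \<bar>C1\<bar> * (2 * N f)" using q(2) by linarith
  have d: "mult_defect \<Omega> w f \<in> X" "N (mult_defect \<Omega> w f) \<le> \<bar>C0\<bar> * N f"
    if "w \<in> units_group M" for w
  proof -
    show "mult_defect \<Omega> w f \<in> X" using C0 that f by blast
    have "C0 * N f \<le> \<bar>C0\<bar> * N f" using Nf by (intro mult_right_mono) auto
    then show "N (mult_defect \<Omega> w f) \<le> \<bar>C0\<bar> * N f" using C0 that f by fastforce
  qed
  let ?r = "\<lambda>x. (?q x + mult_defect \<Omega> u f x + mult_defect \<Omega> v f x) / 2"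
  have r: "?r \<in> X" "N ?r \<le> (\<bar>C0\<bar> + \<bar>C1\<bar>) * N f"
    using koethe_space_half_sum3[OF K q(1) d(1)[OF u] d(1)[OF v]] Nq d(2)[OF u] d(2)[OF v]
    by (simp_all add: field_simps)
  have "(\<lambda>t. b t * f t) \<in> X"
    using le by (intro koethe_space_mult_contraction[OF K f b, THEN conjunct1]) auto
  then have "mult_defect \<Omega> b f \<in> borel_measurable M"
    unfolding mult_defect_def using hom_quasi_linear_measurable[OF Q] f b by measurable
  from koethe_space_AE_eq[OF K r(1) this
      mult_defect_midpoint[OF K Q unit_mult(1)[OF u] unit_mult(1)[OF v] uv]]
  show ?thesis using r(2) by simp
qed

lemma mult_defect_AE_scale:
  assumes K: "koethe_space M X N" and Q: "hom_quasi_linear M X N \<Omega>"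
    and a: "a \<in> borel_measurable M" and f: "f \<in> X" and bf: "(\<lambda>t. b t * f t) \<in> X"
    and ab: "AE x in M. a x = c * b x"
  shows "AE x in M. mult_defect \<Omega> a f x = c * mult_defect \<Omega> b f x"
proof -
  have cbf: "(\<lambda>t. c * (b t * f t)) \<in> X" using koethe_space_scale[OF K bf] by blast
  have afe: "AE x in M. a x * f x = c * (b x * f x)"
    using ab by eventually_elim simp
  from hom_quasi_linear_AE_cong[OF Q koethe_space_mult_AE_scale[OF K f a bf ab] cbf afe]
    hom_quasi_linear_homogeneous[OF Q bf, of c] ab
  show ?thesis
    by eventually_elim (simp add: mult_defect_def algebra_simps)
qed

lemma Linf_centralizer_imp_U_centralizer:
  assumes K: "koethe_space M X N" and L: "Linf_centralizer M X N \<Omega>"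
  shows "U_centralizer M X N \<Omega>"
proof -
  obtain C where C: "\<forall>a\<in>Linf M. \<forall>f\<in>X.
      mult_defect \<Omega> a f \<in> X \<and> N (mult_defect \<Omega> a f) \<le> C * Linf_norm M a * N f"
    using L unfolding Linf_centralizer_iff by blast
  have "mult_defect \<Omega> a f \<in> X \<and> N (mult_defect \<Omega> a f) \<le> \<bar>C\<bar> * N f"
    if a: "a \<in> units_group M" and f: "f \<in> X" for a f
  proof -
    have L0: "0 \<le> Linf_norm M a" and L1: "Linf_norm M a \<le> 1"
      using a Linf_norm_nonneg Linf_norm_unit_le_one by (auto simp: units_group_def)
    have "C * Linf_norm M a \<le> \<bar>C\<bar> * Linf_norm M a"
      using L0 by (intro mult_right_mono) auto
    also have "\<dots> \<le> \<bar>C\<bar>"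
      using L0 L1 by (intro mult_left_le) auto
    finally have "C * Linf_norm M a * N f \<le> \<bar>C\<bar> * N f"
      using koethe_space_norm_nonneg[OF K f] by (intro mult_right_mono)
    with C a f units_group_subset_Linf show ?thesis by fastforce
  qed
  then show ?thesis unfolding U_centralizer_iff by blast
qed

lemma U_centralizer_imp_Linf_centralizer:
  assumes K: "koethe_space M X N" and Q: "hom_quasi_linear M X N \<Omega>"
    and U: "U_centralizer M X N \<Omega>"
  shows "Linf_centralizer M X N \<Omega>"
proof -
  obtain C0 where C0: "\<forall>a\<in>units_group M. \<forall>f\<in>X.
      mult_defect \<Omega> a f \<in> X \<and> N (mult_defect \<Omega> a f) \<le> C0 * N f"
    using U unfolding U_centralizer_iff by blast
  obtain C1 where C1: "\<forall>f\<in>X. \<forall>g\<in>X. add_defect \<Omega> f g \<in> X \<and> N (add_defect \<Omega> f g) \<le> C1 * (N f + N g)"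
    using hom_quasi_linear_add_defect[OF Q] by blast
  have "mult_defect \<Omega> a f \<in> X \<and>
      N (mult_defect \<Omega> a f) \<le> (\<bar>C0\<bar> + \<bar>C1\<bar>) * Linf_norm M a * N f"
    if aL: "a \<in> Linf M" and f: "f \<in> X" for a f
  proof -
    define L where "L = Linf_norm M a"
    have am: "a \<in> borel_measurable M" using aL by (simp add: Linf_def)
    have L0: "0 \<le> L" unfolding L_def using Linf_norm_nonneg[OF am] .
    \<comment> \<open>for \<open>L = 0\<close> division by zero makes \<open>b = 0\<close>, and then \<open>a = 0\<close> a.e.\<close>
    define b where "b x = (if norm (a x) \<le> L then a x / complex_of_real L else 0)" for x
    have bm: "b \<in> borel_measurable M" unfolding b_def[abs_def] using am by measurable
    have ble: "norm (b x) \<le> 1" for x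
      by (cases "L = 0") (auto simp: b_def norm_divide divide_le_eq)
    have ab: "AE x in M. a x = complex_of_real L * b x"
      using AE_norm_le_Linf_norm[OF aL, folded L_def]
      by eventually_elim (cases "L = 0", auto simp: b_def)
    have bf: "(\<lambda>t. b t * f t) \<in> X"
      using ble by (intro koethe_space_mult_contraction[OF K f bm, THEN conjunct1]) auto
    have bound: "mult_defect \<Omega> b f \<in> X \<and> N (mult_defect \<Omega> b f) \<le> (\<bar>C0\<bar> + \<bar>C1\<bar>) * N f"
      by (rule mult_defect_contraction_bound[OF K Q C1 C0 bm ble f])
    have scaled: "(\<lambda>x. complex_of_real L * mult_defect \<Omega> b f x) \<in> X \<and>
        N (\<lambda>x. complex_of_real L * mult_defect \<Omega> b f x) = L * N (mult_defect \<Omega> b f)"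
      using koethe_space_scale[OF K bound[THEN conjunct1]] L0 by simp
    have "(\<lambda>t. a t * f t) \<in> X" by (rule koethe_space_mult_AE_scale[OF K f am bf ab])
    then have "mult_defect \<Omega> a f \<in> borel_measurable M"
      unfolding mult_defect_def using hom_quasi_linear_measurable[OF Q] f am by measurable
    from koethe_space_AE_eq[OF K scaled[THEN conjunct1] this mult_defect_AE_scale[OF K Q am f bf ab]]
    have "mult_defect \<Omega> a f \<in> X \<and> N (mult_defect \<Omega> a f) = L * N (mult_defect \<Omega> b f)"
      using scaled by simp
    moreover have "L * N (mult_defect \<Omega> b f) \<le> L * ((\<bar>C0\<bar> + \<bar>C1\<bar>) * N f)"
      using bound L0 by (intro mult_left_mono) auto
    ultimately show ?thesis by (simp add: L_def algebra_simps)
  qed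
  then show ?thesis unfolding Linf_centralizer_iff by blast
qed

theorem mainTheorem1:
  fixes M :: "'a measure" and X :: "('a \<Rightarrow> complex) set"
    and N :: "('a \<Rightarrow> complex) \<Rightarrow> real"
    and \<Omega> :: "('a \<Rightarrow> complex) \<Rightarrow> ('a \<Rightarrow> complex)"
  assumes "sigma_finite_measure M"
    and "koethe_space M X N"
    and "B_convex X N"
    and "hom_quasi_linear M X N \<Omega>"
  shows "U_centralizer M X N \<Omega> \<longleftrightarrow> Linf_centralizer M X N \<Omega>"
  using assms(2,4) U_centralizer_imp_Linf_centralizer Linf_centralizer_imp_U_centralizer by blast

end
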